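(* Let $f$ be an intersection of $k$ halfspaces on $\mathbb{R}^n$ and let $\mathcal{D}$ be a distribution on $\mathbb{R}^n$ that is $\rho$-robust with respect to $f$, where $\rho>0$, and suppose $\mathrm{supp}(\mathcal{D})\not\subset f^{-1}(-1)$. Then $\mathcal{D}$ has margin $\frac{1}{2}\rho^2$ with respect to $f$.
   Context: An intersection of $k$ halfspaces is $f(x)=1$ if $w_i\cdot x>\theta_i$ for all $i\in[k]$, $f(x)=-1$ otherwise, with $\|w_i\|_2=1$, $\theta_i\in\mathbb{R}$. Let $R=\sup_{x\in\mathrm{supp}(\mathcal{D})}\|x\|_2$. $\mathcal{D}$ is $\rho$-robust with respect to $f$ if $\inf\{\|x-y\|_2: x\in\mathrm{supp}(\mathcal{D}), y\in\mathbb{R}^n, f(x)\ne f(y)\}/R\ge\rho$. $\mathcal{D}$ has margin $\rho'$ with respect to $f$ if for every $x\in\mathrm{supp}(\mathcal{D})$ with $f(x)=-1$ there is $i\in[k]$ with $(w_i\cdot x-\theta_i)/R\le-\rho'$. *)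

theory Defs
  imports "HOL-Probability.Probability"
begin

definition halfspaces_fn :: "(nat \<Rightarrow> 'a::real_inner) \<Rightarrow> (nat \<Rightarrow> real) \<Rightarrow> nat \<Rightarrow> 'a \<Rightarrow> int" where
  "halfspaces_fn w \<theta> k x = (if \<forall>i<k. w i \<bullet> x > \<theta> i then 1 else -1)"

definition msupp :: "'a::metric_space measure \<Rightarrow> 'a set" where
  "msupp M = {x. \<forall>e>0. emeasure M (ball x e) > 0}"

definition supp_radius :: "'a::real_normed_vector measure \<Rightarrow> real" where
  "supp_radius M = Sup (norm ` msupp M)"

text \<open>rho-robustness: inf{ |x-y| : x in supp, f x ~= f y } / R >= rho, written multiplicatively
  (R is required to be finite, i.e. the support bounded).\<close>
definition robust :: "'a::real_normed_vector measure \<Rightarrow> ('a \<Rightarrow> int) \<Rightarrow> real \<Rightarrow> bool" where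
  "robust M f \<rho> \<longleftrightarrow> bounded (msupp M) \<and>
     (\<forall>x\<in>msupp M. \<forall>y. f x \<noteq> f y \<longrightarrow> \<rho> * supp_radius M \<le> dist x y)"

definition has_margin :: "'a::real_inner measure \<Rightarrow> (nat \<Rightarrow> 'a) \<Rightarrow> (nat \<Rightarrow> real) \<Rightarrow> nat \<Rightarrow> real \<Rightarrow> bool" where
  "has_margin M w \<theta> k \<rho>' \<longleftrightarrow>
     (\<forall>x\<in>msupp M. halfspaces_fn w \<theta> k x = -1 \<longrightarrow>
        (\<exists>i<k. w i \<bullet> x - \<theta> i \<le> - \<rho>' * supp_radius M))"

end

theory Submission
  imports Defs
begin

text \<open>A positive support point p lies at distance at least \<rho>R from every hyperplane bounding f,
  since the orthogonal projection onto such a hyperplane is a negative point; so p has slack at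
  least \<rho>R in every constraint. If a negative support point x had slack greater than
  -\<rho>^2 R/2 in every constraint, then the point of the segment from x to p at fraction
  t = \<rho>/(2+\<rho>) would be positive, yet it lies within distance 2tR < \<rho>R of x, contradicting
  robustness at x. The measure enters only through its support.\<close>

lemma unit_normal_projection:
  fixes w p :: "'a::real_inner"
  assumes "norm w = 1"
  shows "w \<bullet> (p - (w \<bullet> p - c) *\<^sub>R w) = c"
    and "dist p (p - (w \<bullet> p - c) *\<^sub>R w) = \<bar>w \<bullet> p - c\<bar>"
proof -
  have "w \<bullet> w = 1"
    using assms by (simp add: dot_square_norm)
  then show "w \<bullet> (p - (w \<bullet> p - c) *\<^sub>R w) = c"
    by (simp add: inner_diff_right)
  show "dist p (p - (w \<bullet> p - c) *\<^sub>R w) = \<bar>w \<bullet> p - c\<bar>"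
    using assms by (simp add: dist_norm)
qed

lemma halfspaces_fn_eq_1_iff: "halfspaces_fn w \<theta> k x = 1 \<longleftrightarrow> (\<forall>i<k. \<theta> i < w i \<bullet> x)"
  by (simp add: halfspaces_fn_def)

lemma halfspaces_fn_neq_1_iff: "halfspaces_fn w \<theta> k x \<noteq> 1 \<longleftrightarrow> halfspaces_fn w \<theta> k x = -1"
  by (simp add: halfspaces_fn_def)

lemma halfspaces_slack_ge_robust_dist:
  fixes w :: "nat \<Rightarrow> 'a::real_inner"
  assumes "i < k" and "norm (w i) = 1" and "halfspaces_fn w \<theta> k p = 1"
    and "\<And>y. halfspaces_fn w \<theta> k y \<noteq> 1 \<Longrightarrow> d \<le> dist p y"
  shows "d \<le> w i \<bullet> p - \<theta> i"
proof -
  define y where "y = p - (w i \<bullet> p - \<theta> i) *\<^sub>R w i"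
  have "w i \<bullet> y = \<theta> i"
    unfolding y_def using assms(2) by (rule unit_normal_projection)
  then have "halfspaces_fn w \<theta> k y \<noteq> 1"
    using \<open>i < k\<close> by (auto simp: halfspaces_fn_eq_1_iff)
  then have "d \<le> dist p y"
    by (rule assms(4))
  also have "dist p y = \<bar>w i \<bullet> p - \<theta> i\<bar>"
    unfolding y_def using assms(2) by (rule unit_normal_projection)
  also have "\<dots> = w i \<bullet> p - \<theta> i"
    using assms(1,3) by (auto simp: halfspaces_fn_eq_1_iff)
  finally show ?thesis .
qed

lemma halfspaces_fn_segment_eq_1:
  fixes w :: "nat \<Rightarrow> 'a::real_inner"
  assumes "\<And>i. i < k \<Longrightarrow> - m < w i \<bullet> x - \<theta> i"
    and "\<And>i. i < k \<Longrightarrow> s \<le> w i \<bullet> p - \<theta> i"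
    and "0 \<le> t" and "t < 1" and "(1 - t) * m \<le> t * s"
  shows "halfspaces_fn w \<theta> k ((1 - t) *\<^sub>R x + t *\<^sub>R p) = 1"
  unfolding halfspaces_fn_eq_1_iff
proof (intro allI impI)
  fix i assume "i < k"
  have "0 \<le> (1 - t) * - m + t * s"
    using assms(5) by simp
  also have "\<dots> < (1 - t) * (w i \<bullet> x - \<theta> i) + t * (w i \<bullet> p - \<theta> i)"
    using assms(1,2)[OF \<open>i < k\<close>] assms(3,4)
    by (intro add_less_le_mono mult_strict_left_mono mult_left_mono) auto
  also have "\<dots> = w i \<bullet> ((1 - t) *\<^sub>R x + t *\<^sub>R p) - \<theta> i"
    by (simp add: inner_add_right algebra_simps)
  finally show "\<theta> i < w i \<bullet> ((1 - t) *\<^sub>R x + t *\<^sub>R p)"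
    by simp
qed

lemma robust_halfspaces_violation:
  fixes w :: "nat \<Rightarrow> 'a::real_inner"
  assumes unit: "\<And>i. i < k \<Longrightarrow> norm (w i) = 1" and "0 < \<rho>"
    and pos: "halfspaces_fn w \<theta> k p = 1" and neg: "halfspaces_fn w \<theta> k x = -1"
    and "norm p \<le> R" and "norm x \<le> R"
    and robust_p: "\<And>y. halfspaces_fn w \<theta> k y \<noteq> 1 \<Longrightarrow> \<rho> * R \<le> dist p y"
    and robust_x: "\<And>y. halfspaces_fn w \<theta> k y \<noteq> -1 \<Longrightarrow> \<rho> * R \<le> dist x y"
  shows "\<exists>i<k. w i \<bullet> x - \<theta> i \<le> - (\<rho>\<^sup>2 / 2) * R"
proof (rule ccontr)
  assume "\<not> ?thesis"
  then have slack_x: "\<And>i. i < k \<Longrightarrow> - (\<rho>\<^sup>2 / 2 * R) < w i \<bullet> x - \<theta> i"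
    by force
  have slack_p: "\<rho> * R \<le> w i \<bullet> p - \<theta> i" if "i < k" for i
    using that unit[OF that] pos robust_p by (rule halfspaces_slack_ge_robust_dist)
  have "0 < R"
  proof (rule ccontr)
    assume "\<not> 0 < R"
    then have "norm x \<le> 0" and "norm p \<le> 0"
      using \<open>norm p \<le> R\<close> \<open>norm x \<le> R\<close> by linarith+
    then have "x = 0" and "p = 0"
      by simp_all
    then show False
      using pos neg by simp
  qed
  define t where "t = \<rho> / (2 + \<rho>)"
  have t: "0 < t" "t < 1"
    using \<open>0 < \<rho>\<close> by (auto simp: t_def)
  define y where "y = (1 - t) *\<^sub>R x + t *\<^sub>R p"
  have "halfspaces_fn w \<theta> k y = 1"
    unfolding y_def
  proof (rule halfspaces_fn_segment_eq_1[OF slack_x slack_p])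
    show "(1 - t) * (\<rho>\<^sup>2 / 2 * R) \<le> t * (\<rho> * R)"
      using \<open>0 < \<rho>\<close> \<open>0 < R\<close> by (simp add: t_def field_simps power2_eq_square)
  qed (use t in auto)
  then have "\<rho> * R \<le> dist x y"
    by (intro robust_x) simp
  also have "dist x y = t * norm (p - x)"
    using t(1) by (simp add: y_def dist_norm algebra_simps norm_minus_commute flip: scaleR_diff_right)
  also have "\<dots> \<le> t * (2 * R)"
    using t(1) norm_triangle_ineq4[of p x] \<open>norm p \<le> R\<close> \<open>norm x \<le> R\<close>
    by (intro mult_left_mono) auto
  also have "\<dots> < \<rho> * R"
    using \<open>0 < \<rho>\<close> \<open>0 < R\<close> by (simp add: t_def field_simps)
  finally show False
    by simp
qed

lemma norm_le_supp_radius: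
  assumes "bounded (msupp M)" and "x \<in> msupp M"
  shows "norm x \<le> supp_radius M"
  unfolding supp_radius_def
  using assms by (intro cSup_upper) (auto simp: bounded_norm_le_SUP_norm bdd_above_norm)

theorem lemma2p6:
  fixes D :: "(real ^ 'n) measure"
    and w :: "nat \<Rightarrow> real ^ 'n" and \<theta> :: "nat \<Rightarrow> real" and k :: nat and \<rho> :: real
  assumes "prob_space D" and "sets D = sets borel"
    and "\<And>i. i < k \<Longrightarrow> norm (w i) = 1"
    and "\<rho> > 0"
    and "robust D (halfspaces_fn w \<theta> k) \<rho>"
    and "\<not> msupp D \<subseteq> {x. halfspaces_fn w \<theta> k x = -1}"
  shows "has_margin D w \<theta> k (\<rho>^2 / 2)"
  unfolding has_margin_def
proof (intro ballI impI)
  fix x assume x: "x \<in> msupp D" "halfspaces_fn w \<theta> k x = -1"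
  have bounded: "bounded (msupp D)"
    and robust: "\<And>z y. z \<in> msupp D \<Longrightarrow> halfspaces_fn w \<theta> k z \<noteq> halfspaces_fn w \<theta> k y
                   \<Longrightarrow> \<rho> * supp_radius D \<le> dist z y"
    using assms(5) by (auto simp: robust_def)
  obtain p where p: "p \<in> msupp D" "halfspaces_fn w \<theta> k p = 1"
    using assms(6) halfspaces_fn_neq_1_iff by blast
  show "\<exists>i<k. w i \<bullet> x - \<theta> i \<le> - (\<rho>\<^sup>2 / 2) * supp_radius D"
    using assms(3,4) p(2) x(2) norm_le_supp_radius[OF bounded p(1)] norm_le_supp_radius[OF bounded x(1)]
  proof (rule robust_halfspaces_violation)
    show "\<rho> * supp_radius D \<le> dist p y" if "halfspaces_fn w \<theta> k y \<noteq> 1" for y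
      using robust[OF p(1)] p(2) that by metis
    show "\<rho> * supp_radius D \<le> dist x y" if "halfspaces_fn w \<theta> k y \<noteq> -1" for y
      using robust[OF x(1)] x(2) that by metis
  qed
qed

end
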